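(* For every fixed positive integer $n$ there exists $\varepsilon>0$ such that for every positive integer $N$ there is no partitioning $f$ of the complete directed graph with loops $K_N$ on $N$ vertices (vertex set $V$ with $|V|=N$ and edge set $E=V\times V$) into $n$ partitions such that both (1) $\mathrm{rf}(f,v)\le k(n)-1$ for all $v\in V$, and (2) $\mathrm{ib}(f)\le 1+\varepsilon$.
   Context: Let $G=(V,E)$ be a directed graph and $P$ an $n$-element set (the partitions). A graph partitioning (partitioning into $n$ partitions) is a function $f:E\to P$. Its imbalance is $\mathrm{ib}(f)=\dfrac{\max_{l\in P}|\{e\in E: f(e)=l\}|}{|E|/n}$. For $v\in V$ let $E(v)$ be the set of edges incident to $v$; the replication factor of $v$ is $\mathrm{rf}(f,v)=|f(E(v))|$. A system on $n$ elements is a triple $(\mathcal{F},w,s)$ where $\mathcal{F}=(F_1,\dots,F_m)$ is a collection of subsets of $[n]$, $w\in[0,1]^m$ with $\sum_i w_i=1$, and $s\in[0,1]^{m\times m\times n}$ with $\sum_p s_{ijp}=1$ for all $i,j$. It is intersecting if for all $i,j,p$, $s_{ijp}>0$ implies $p\in F_i\cap F_j$. It is balanced if for all $p\in[n]$, $\sum_{i,j} w_iw_js_{ijp}=1/n$. Its cardinality is the size of the largest set in $\mathcal{F}$. $k(n)$ is the minimum $k$ such that there exists a balanced intersecting system on $n$ elements with cardinality $k$. *)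

theory Defs
  imports Main "HOL-Analysis.Analysis"
begin

definition partitioning :: "('v \<times> 'v) set \<Rightarrow> 'p set \<Rightarrow> ('v \<times> 'v \<Rightarrow> 'p) \<Rightarrow> bool" where
  "partitioning E P f \<longleftrightarrow> (\<forall>e\<in>E. f e \<in> P)"

definition imbalance :: "('v \<times> 'v) set \<Rightarrow> 'p set \<Rightarrow> ('v \<times> 'v \<Rightarrow> 'p) \<Rightarrow> real" where
  "imbalance E P f =
     real (Max ((\<lambda>l. card {e\<in>E. f e = l}) ` P)) / (real (card E) / real (card P))"

definition incident_edges :: "('v \<times> 'v) set \<Rightarrow> 'v \<Rightarrow> ('v \<times> 'v) set" where
  "incident_edges E v = {e\<in>E. fst e = v \<or> snd e = v}"

definition replication_factor :: "('v \<times> 'v) set \<Rightarrow> ('v \<times> 'v \<Rightarrow> 'p) \<Rightarrow> 'v \<Rightarrow> nat" where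
  "replication_factor E f v = card (f ` incident_edges E v)"

text \<open>Systems on n elements. The collection F = (F_1,...,F_m) is indexed by 0..<m,
  the ground set is [n] = {1..n}.\<close>

definition is_system ::
  "nat \<Rightarrow> nat \<Rightarrow> (nat \<Rightarrow> nat set) \<Rightarrow> (nat \<Rightarrow> real) \<Rightarrow> (nat \<Rightarrow> nat \<Rightarrow> nat \<Rightarrow> real) \<Rightarrow> bool" where
  "is_system n m F w s \<longleftrightarrow>
     (\<forall>i<m. F i \<subseteq> {1..n}) \<and>
     (\<forall>i<m. 0 \<le> w i \<and> w i \<le> 1) \<and> (\<Sum>i<m. w i) = 1 \<and>
     (\<forall>i<m. \<forall>j<m. \<forall>p\<in>{1..n}. 0 \<le> s i j p \<and> s i j p \<le> 1) \<and>
     (\<forall>i<m. \<forall>j<m. (\<Sum>p\<in>{1..n}. s i j p) = 1)"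

definition intersecting_system ::
  "nat \<Rightarrow> nat \<Rightarrow> (nat \<Rightarrow> nat set) \<Rightarrow> (nat \<Rightarrow> real) \<Rightarrow> (nat \<Rightarrow> nat \<Rightarrow> nat \<Rightarrow> real) \<Rightarrow> bool" where
  "intersecting_system n m F w s \<longleftrightarrow>
     (\<forall>i<m. \<forall>j<m. \<forall>p\<in>{1..n}. s i j p > 0 \<longrightarrow> p \<in> F i \<inter> F j)"

definition balanced_system ::
  "nat \<Rightarrow> nat \<Rightarrow> (nat \<Rightarrow> nat set) \<Rightarrow> (nat \<Rightarrow> real) \<Rightarrow> (nat \<Rightarrow> nat \<Rightarrow> nat \<Rightarrow> real) \<Rightarrow> bool" where
  "balanced_system n m F w s \<longleftrightarrow>
     (\<forall>p\<in>{1..n}. (\<Sum>i<m. \<Sum>j<m. w i * w j * s i j p) = 1 / real n)"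

definition system_cardinality :: "nat \<Rightarrow> (nat \<Rightarrow> nat set) \<Rightarrow> nat" where
  "system_cardinality m F = Max (card ` F ` {..<m})"

definition kmin :: "nat \<Rightarrow> nat" where
  "kmin n = (LEAST k. \<exists>m F w s. is_system n m F w s \<and> intersecting_system n m F w s \<and>
                                 balanced_system n m F w s \<and> system_cardinality m F = k)"

end

theory Submission
  imports Defs
begin

(*
  A partitioning f of K_N induces an intersecting system indexed by the vertices: vertex v carries
  its replica set f(E(v)) and weight 1/N, and s u v is the point mass at f(u,v). Partition p then
  receives the load |f^-1(p)|/N^2, so imbalance at most 1 + eps bounds the overload
  sum_p max(0, load p - 1/n) by eps. Merging vertices with equal replica sets keeps the loads and
  yields a system on a family of distinct subsets of [n], each of size below k(n); by minimality of
  k(n) such a system is not balanced, i.e. its overload is positive. There are only finitely many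
  such families, and on each the overload is a continuous function on a compact space of systems,
  so it is bounded below by a uniform delta > 0, which rules out eps = delta/2.
*)

definition load :: "nat \<Rightarrow> (nat \<Rightarrow> real) \<Rightarrow> (nat \<Rightarrow> nat \<Rightarrow> nat \<Rightarrow> real) \<Rightarrow> nat \<Rightarrow> real" where
  "load m w s p = (\<Sum>i<m. \<Sum>j<m. w i * w j * s i j p)"

definition overload :: "nat \<Rightarrow> nat \<Rightarrow> (nat \<Rightarrow> real) \<Rightarrow> (nat \<Rightarrow> nat \<Rightarrow> nat \<Rightarrow> real) \<Rightarrow> real" where
  "overload n m w s = (\<Sum>p\<in>{1..n}. max 0 (load m w s p - 1 / real n))"

lemma sum_load_eq_1:
  assumes "is_system n m F w s"
  shows "(\<Sum>p\<in>{1..n}. load m w s p) = 1"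
proof -
  have "(\<Sum>p\<in>{1..n}. load m w s p) = (\<Sum>i<m. \<Sum>j<m. w i * w j * (\<Sum>p\<in>{1..n}. s i j p))"
    unfolding load_def sum_distrib_left by (subst sum.swap, subst (2) sum.swap) simp
  also have "\<dots> = (\<Sum>i<m. \<Sum>j<m. w i * w j)"
    using assms by (simp add: is_system_def)
  also have "\<dots> = (\<Sum>i<m. w i) * (\<Sum>j<m. w j)"
    by (simp add: sum_product)
  also have "\<dots> = 1"
    using assms by (simp add: is_system_def)
  finally show ?thesis .
qed

lemma balanced_if_overload_nonpos:
  assumes "n > 0" and sys: "is_system n m F w s" and "overload n m w s \<le> 0"
  shows "balanced_system n m F w s"
proof -
  have "overload n m w s = 0"
    using assms(3) sum_nonneg[of "{1..n}" "\<lambda>p. max 0 (load m w s p - 1 / real n)"]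
    unfolding overload_def by simp
  then have "\<forall>p\<in>{1..n}. max 0 (load m w s p - 1 / real n) = 0"
    unfolding overload_def by (subst sum_nonneg_eq_0_iff[symmetric]) auto
  then have le: "\<forall>p\<in>{1..n}. 0 \<le> 1 / real n - load m w s p"
    by (metis diff_ge_0_iff_ge max.cobounded2 diff_le_0_iff_le)
  have "(\<Sum>p\<in>{1..n}. 1 / real n - load m w s p) = 0"
    using sum_load_eq_1[OF sys] \<open>n > 0\<close> by (simp add: sum_subtractf)
  then have "\<forall>p\<in>{1..n}. load m w s p = 1 / real n"
    using le by (subst (asm) sum_nonneg_eq_0_iff) auto
  then show ?thesis
    unfolding balanced_system_def load_def by blast
qed

lemma kmin_le_system_cardinality:
  assumes "is_system n m F w s" "intersecting_system n m F w s" "balanced_system n m F w s"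
  shows "kmin n \<le> system_cardinality m F"
  unfolding kmin_def by (rule Least_le) (use assms in blast)

lemma overload_pos_if_sets_small:
  assumes "n > 0" and sys: "is_system n m F w s" and "intersecting_system n m F w s"
    and small: "\<forall>i<m. card (F i) < kmin n"
  shows "0 < overload n m w s"
proof (rule ccontr)
  assume "\<not> 0 < overload n m w s"
  then have "kmin n \<le> system_cardinality m F"
    using assms balanced_if_overload_nonpos kmin_le_system_cardinality by force
  moreover have "m \<noteq> 0"
    using sys by (intro notI) (simp add: is_system_def)
  then have "system_cardinality m F < kmin n"
    using small unfolding system_cardinality_def by (subst Max_less_iff) auto
  ultimately show False by simp
qed

lemma overload_le_if_load_le:
  assumes "n > 0" and "0 \<le> \<epsilon>" and "\<forall>p\<in>{1..n}. load m w s p \<le> (1 + \<epsilon>) / real n"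
  shows "overload n m w s \<le> \<epsilon>"
proof -
  have "overload n m w s \<le> (\<Sum>p\<in>{1..n}. \<epsilon> / real n)"
    unfolding overload_def
  proof (rule sum_mono)
    fix p assume "p \<in> {1..n}"
    then have "load m w s p \<le> (1 + \<epsilon>) / real n"
      using assms(3) by blast
    then have "load m w s p - 1 / real n \<le> \<epsilon> / real n"
      by (simp add: add_divide_distrib)
    then show "max 0 (load m w s p - 1 / real n) \<le> \<epsilon> / real n"
      using assms(1,2) by simp
  qed
  also have "\<dots> = \<epsilon>"
    using assms(1) by simp
  finally show ?thesis .
qed

section \<open>Compactness of the space of systems\<close>

lemma system_cong:
  assumes "\<forall>i<m. w' i = w i" and "\<forall>i<m. \<forall>j<m. \<forall>p\<in>{1..n}. s' i j p = s i j p"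
  shows "is_system n m F w' s' \<longleftrightarrow> is_system n m F w s"
    and "intersecting_system n m F w' s' \<longleftrightarrow> intersecting_system n m F w s"
    and "overload n m w' s' = overload n m w s"
  using assms by (simp_all add: is_system_def intersecting_system_def overload_def load_def)

lemma compact_unit_cube: "compact {x :: 'a \<Rightarrow> real. \<forall>i. x i \<in> {0..1}}"
proof -
  have "compactin (product_topology (\<lambda>_. euclidean) UNIV) (PiE UNIV (\<lambda>_::'a. {0..1::real}))"
    by (subst compactin_PiE) auto
  moreover have "PiE UNIV (\<lambda>_::'a. {0..1::real}) = {x. \<forall>i. x i \<in> {0..1}}"
    by (auto simp: PiE_def Pi_def)
  ultimately show ?thesis
    by (simp add: euclidean_product_topology)
qed

lemma continuous_on_pair_coordinates:
  shows "continuous_on UNIV (\<lambda>x :: ('a \<Rightarrow> 'b::topological_space) \<times> ('c \<Rightarrow> 'd::topological_space). fst x i)"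
    and "continuous_on UNIV (\<lambda>x :: ('a \<Rightarrow> 'b::topological_space) \<times> ('c \<Rightarrow> 'd::topological_space). snd x j)"
  by (rule continuous_on_product_then_coordinatewise[OF continuous_on_fst[OF continuous_on_id]]
      continuous_on_product_then_coordinatewise[OF continuous_on_snd[OF continuous_on_id]])+

lemma compact_system_set:
  "compact (({w. \<forall>i. w i \<in> {0..1}} \<times> {s. \<forall>t. s t \<in> {0..1::real}}) \<inter>
     {x :: (nat \<Rightarrow> real) \<times> (nat \<times> nat \<times> nat \<Rightarrow> real).
       is_system n m F (fst x) (\<lambda>i j p. snd x (i, j, p)) \<and>
       intersecting_system n m F (fst x) (\<lambda>i j p. snd x (i, j, p))})"
proof (rule compact_Int_closed)
  show "compact ({w :: nat \<Rightarrow> real. \<forall>i. w i \<in> {0..1}} \<times> {s :: nat \<times> nat \<times> nat \<Rightarrow> real. \<forall>t. s t \<in> {0..1}})"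
    by (intro compact_Times compact_unit_cube)
  show "closed {x :: (nat \<Rightarrow> real) \<times> (nat \<times> nat \<times> nat \<Rightarrow> real).
      is_system n m F (fst x) (\<lambda>i j p. snd x (i, j, p)) \<and>
      intersecting_system n m F (fst x) (\<lambda>i j p. snd x (i, j, p))}"
    unfolding is_system_def intersecting_system_def Ball_def
    by (intro closed_Collect_conj closed_Collect_all closed_Collect_imp closed_Collect_eq
        closed_Collect_le open_Collect_less open_Collect_const closed_Collect_const
        continuous_intros continuous_on_pair_coordinates)
qed

lemma overload_uniformly_positive:
  assumes pos: "\<And>w s. is_system n m F w s \<Longrightarrow> intersecting_system n m F w s \<Longrightarrow> 0 < overload n m w s"
  obtains \<delta> where "0 < \<delta>"
    "\<And>w s. is_system n m F w s \<Longrightarrow> intersecting_system n m F w s \<Longrightarrow> \<delta> \<le> overload n m w s"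
proof -
  define K where "K = ({w. \<forall>i. w i \<in> {0..1}} \<times> {s. \<forall>t. s t \<in> {0..1::real}}) \<inter>
     {x :: (nat \<Rightarrow> real) \<times> (nat \<times> nat \<times> nat \<Rightarrow> real).
       is_system n m F (fst x) (\<lambda>i j p. snd x (i, j, p)) \<and>
       intersecting_system n m F (fst x) (\<lambda>i j p. snd x (i, j, p))}"
  define ovl where "ovl x = overload n m (fst x) (\<lambda>i j p. snd x (i, j, p))"
    for x :: "(nat \<Rightarrow> real) \<times> (nat \<times> nat \<times> nat \<Rightarrow> real)"
  have "continuous_on UNIV ovl"
    unfolding ovl_def overload_def load_def by (intro continuous_intros continuous_on_pair_coordinates)
  then have "continuous_on K ovl"
    by (rule continuous_on_subset) simp
  obtain \<delta> where "0 < \<delta>" and \<delta>: "\<And>x. x \<in> K \<Longrightarrow> \<delta> \<le> ovl x"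
  proof (cases "K = {}")
    case False
    then obtain x0 where "x0 \<in> K" "\<And>x. x \<in> K \<Longrightarrow> ovl x0 \<le> ovl x"
      using continuous_attains_inf[OF _ False \<open>continuous_on K ovl\<close>] compact_system_set
      unfolding K_def by blast
    moreover have "0 < ovl x0"
      using pos \<open>x0 \<in> K\<close> by (simp add: K_def ovl_def)
    ultimately show ?thesis
      using that by blast
  qed (use that[of 1] in simp)
  show ?thesis
  proof (rule that[OF \<open>0 < \<delta>\<close>])
    fix w s assume ws: "is_system n m F w s" "intersecting_system n m F w s"
    \<comment> \<open>Values outside the index range are irrelevant, so truncate them to land in the unit cube.\<close>
    define x where "x = (\<lambda>i. if i < m then w i else 0,
       \<lambda>(i, j, p). if i < m \<and> j < m \<and> p \<in> {1..n} then s i j p else 0)"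
    have x_agrees: "\<forall>i<m. fst x i = w i" "\<forall>i<m. \<forall>j<m. \<forall>p\<in>{1..n}. snd x (i, j, p) = s i j p"
      by (simp_all add: x_def)
    have "x \<in> {w. \<forall>i. w i \<in> {0..1}} \<times> {s. \<forall>t. s t \<in> {0..1}}"
      using ws unfolding x_def is_system_def by auto
    then have "x \<in> K"
      using ws system_cong[OF x_agrees] by (simp add: K_def)
    moreover have "ovl x = overload n m w s"
      using system_cong[OF x_agrees] by (simp add: ovl_def)
    ultimately show "\<delta> \<le> overload n m w s"
      using \<delta> by metis
  qed
qed

section \<open>Merging indices that carry the same set\<close>

lemma sum_fibres_from_nat_into:
  assumes "finite I"
  shows "(\<Sum>a<card (F ` I). \<Sum>i\<in>{i\<in>I. F i = from_nat_into (F ` I) a}. g i) = (\<Sum>i\<in>I. g i)"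
  using sum.card_from_nat_into[of "\<lambda>A. \<Sum>i\<in>{i\<in>I. F i = A}. g i" "F ` I"]
    sum.group[OF assms finite_imageI[OF assms] subset_refl, where g = F and h = g]
  by simp

text \<open>Indices of weight zero are dropped, so that all merged weights are positive and
  \<open>merged_split\<close> is a genuine quotient.\<close>

definition merged_sets :: "nat \<Rightarrow> (nat \<Rightarrow> nat set) \<Rightarrow> (nat \<Rightarrow> real) \<Rightarrow> nat set set" where
  "merged_sets m F w = F ` {i. i < m \<and> 0 < w i}"

definition merged_class :: "nat \<Rightarrow> (nat \<Rightarrow> nat set) \<Rightarrow> (nat \<Rightarrow> real) \<Rightarrow> nat \<Rightarrow> nat set" where
  "merged_class m F w a = {i. i < m \<and> 0 < w i \<and> F i = from_nat_into (merged_sets m F w) a}"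

definition merged_weight :: "nat \<Rightarrow> (nat \<Rightarrow> nat set) \<Rightarrow> (nat \<Rightarrow> real) \<Rightarrow> nat \<Rightarrow> real" where
  "merged_weight m F w a = (\<Sum>i\<in>merged_class m F w a. w i)"

definition merged_split ::
  "nat \<Rightarrow> (nat \<Rightarrow> nat set) \<Rightarrow> (nat \<Rightarrow> real) \<Rightarrow> (nat \<Rightarrow> nat \<Rightarrow> nat \<Rightarrow> real) \<Rightarrow> nat \<Rightarrow> nat \<Rightarrow> nat \<Rightarrow> real"
where
  "merged_split m F w s a b p =
     (\<Sum>i\<in>merged_class m F w a. \<Sum>j\<in>merged_class m F w b. w i * w j * s i j p) /
     (merged_weight m F w a * merged_weight m F w b)"

lemma sum_merged_class:
  "(\<Sum>a<card (merged_sets m F w). \<Sum>i\<in>merged_class m F w a. g i) = (\<Sum>i | i < m \<and> 0 < w i. g i)"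
  using sum_fibres_from_nat_into[where I = "{i. i < m \<and> 0 < w i}" and F = F and g = g]
  by (simp add: merged_sets_def merged_class_def conj_assoc)

lemma sum_merged_class_pairs:
  "(\<Sum>a<card (merged_sets m F w). \<Sum>b<card (merged_sets m F w).
      \<Sum>i\<in>merged_class m F w a. \<Sum>j\<in>merged_class m F w b. g i j) =
   (\<Sum>i | i < m \<and> 0 < w i. \<Sum>j | j < m \<and> 0 < w j. g i j)"
proof -
  have "(\<Sum>b<card (merged_sets m F w). \<Sum>i\<in>merged_class m F w a. \<Sum>j\<in>merged_class m F w b. g i j)
      = (\<Sum>i\<in>merged_class m F w a. \<Sum>j | j < m \<and> 0 < w j. g i j)" for a
    by (subst sum.swap) (simp add: sum_merged_class)
  then show ?thesis
    by (simp add: sum_merged_class)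
qed

lemma merged_class_nonempty:
  assumes "a < card (merged_sets m F w)"
  shows "merged_class m F w a \<noteq> {}"
proof -
  have "finite (merged_sets m F w)"
    by (simp add: merged_sets_def)
  then have "from_nat_into (merged_sets m F w) a \<in> merged_sets m F w"
    using assms bij_betwE[OF bij_betw_from_nat_into_finite] by blast
  then show ?thesis
    by (auto simp: merged_sets_def merged_class_def)
qed

lemma merged_weight_pos:
  assumes "a < card (merged_sets m F w)"
  shows "0 < merged_weight m F w a"
  using merged_class_nonempty[OF assms]
  unfolding merged_weight_def by (intro sum_pos) (auto simp: merged_class_def)

lemma sum_over_positive_weights:
  fixes w :: "nat \<Rightarrow> real"
  assumes "\<forall>i<m. 0 \<le> w i" and "\<And>i. i < m \<Longrightarrow> w i = 0 \<Longrightarrow> g i = 0"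
  shows "(\<Sum>i | i < m \<and> 0 < w i. g i) = (\<Sum>i<m. g i)"
proof (rule sum.mono_neutral_left)
  show "\<forall>i\<in>{..<m} - {i. i < m \<and> 0 < w i}. g i = 0"
  proof
    fix i assume "i \<in> {..<m} - {i. i < m \<and> 0 < w i}"
    then have "i < m" and "w i = 0"
      using assms(1) by auto
    then show "g i = 0"
      by (rule assms(2))
  qed
qed auto

lemma sum_merged_weight:
  assumes "is_system n m F w s"
  shows "(\<Sum>a<card (merged_sets m F w). merged_weight m F w a) = 1"
  using assms sum_merged_class[where m = m and F = F and w = w and g = w]
    sum_over_positive_weights[where m = m and w = w and g = w]
  by (simp add: merged_weight_def is_system_def)

lemma merged_split_scaled:
  assumes "a < card (merged_sets m F w)" and "b < card (merged_sets m F w)"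
  shows "merged_weight m F w a * merged_weight m F w b * merged_split m F w s a b p =
    (\<Sum>i\<in>merged_class m F w a. \<Sum>j\<in>merged_class m F w b. w i * w j * s i j p)"
  using merged_weight_pos[OF assms(1)] merged_weight_pos[OF assms(2)]
  by (simp add: merged_split_def)

lemma load_merged:
  assumes "is_system n m F w s"
  shows "load (card (merged_sets m F w)) (merged_weight m F w) (merged_split m F w s) p = load m w s p"
proof -
  have nonneg: "\<forall>i<m. 0 \<le> w i"
    using assms by (simp add: is_system_def)
  have "load (card (merged_sets m F w)) (merged_weight m F w) (merged_split m F w s) p =
      (\<Sum>i | i < m \<and> 0 < w i. \<Sum>j | j < m \<and> 0 < w j. w i * w j * s i j p)"
    unfolding load_def by (simp add: merged_split_scaled sum_merged_class_pairs)
  also have "\<dots> = load m w s p"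
    unfolding load_def using nonneg
    by (simp add: sum_over_positive_weights)
  finally show ?thesis .
qed

lemma merged_weight_nonneg: "0 \<le> merged_weight m F w a"
  unfolding merged_weight_def merged_class_def by (intro sum_nonneg) auto

lemma merged_split_nonneg:
  assumes "is_system n m F w s" and "p \<in> {1..n}"
  shows "0 \<le> merged_split m F w s a b p"
proof -
  have "0 \<le> w i * w j * s i j p" if "i \<in> merged_class m F w a" "j \<in> merged_class m F w b" for i j
  proof -
    have "i < m" "j < m" "0 < w i" "0 < w j"
      using that by (auto simp: merged_class_def)
    then show ?thesis
      using assms by (simp add: is_system_def)
  qed
  then have "0 \<le> (\<Sum>i\<in>merged_class m F w a. \<Sum>j\<in>merged_class m F w b. w i * w j * s i j p)"
    by (simp add: sum_nonneg)
  then show ?thesis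
    unfolding merged_split_def using merged_weight_nonneg by simp
qed

lemma sum_merged_split:
  assumes sys: "is_system n m F w s"
    and ab: "a < card (merged_sets m F w)" "b < card (merged_sets m F w)"
  shows "(\<Sum>p\<in>{1..n}. merged_split m F w s a b p) = 1"
proof -
  let ?W = "merged_weight m F w"
  have "?W a * ?W b * (\<Sum>p\<in>{1..n}. merged_split m F w s a b p) =
      (\<Sum>p\<in>{1..n}. \<Sum>i\<in>merged_class m F w a. \<Sum>j\<in>merged_class m F w b. w i * w j * s i j p)"
    by (simp add: sum_distrib_left merged_split_scaled[OF ab])
  also have "\<dots> =
      (\<Sum>i\<in>merged_class m F w a. \<Sum>j\<in>merged_class m F w b. \<Sum>p\<in>{1..n}. w i * w j * s i j p)"
    by (subst sum.swap, rule sum.cong[OF refl], rule sum.swap)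
  also have "\<dots> =
      (\<Sum>i\<in>merged_class m F w a. \<Sum>j\<in>merged_class m F w b. w i * w j * (\<Sum>p\<in>{1..n}. s i j p))"
    by (simp add: sum_distrib_left)
  also have "\<dots> = (\<Sum>i\<in>merged_class m F w a. \<Sum>j\<in>merged_class m F w b. w i * w j)"
  proof (intro sum.cong refl)
    fix i j assume "i \<in> merged_class m F w a" "j \<in> merged_class m F w b"
    then have "i < m" "j < m"
      by (auto simp: merged_class_def)
    then show "w i * w j * (\<Sum>p\<in>{1..n}. s i j p) = w i * w j"
      using sys by (simp add: is_system_def)
  qed
  also have "\<dots> = ?W a * ?W b"
    by (simp add: merged_weight_def sum_product)
  finally show ?thesis
    using merged_weight_pos[OF ab(1)] merged_weight_pos[OF ab(2)] by simp
qed

lemma is_system_merged: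
  assumes sys: "is_system n m F w s"
  shows "is_system n (card (merged_sets m F w)) (from_nat_into (merged_sets m F w))
    (merged_weight m F w) (merged_split m F w s)"
  unfolding is_system_def
proof (intro conjI allI impI ballI)
  fix a assume a: "a < card (merged_sets m F w)"
  obtain i where "i \<in> merged_class m F w a"
    using merged_class_nonempty[OF a] by blast
  then show "from_nat_into (merged_sets m F w) a \<subseteq> {1..n}"
    using sys by (auto simp: merged_class_def is_system_def)
  show "0 \<le> merged_weight m F w a"
    by (rule merged_weight_nonneg)
  show "merged_weight m F w a \<le> 1"
    using a merged_weight_pos sum_merged_weight[OF sys]
      member_le_sum[of a "{..<card (merged_sets m F w)}" "merged_weight m F w"]
    by (simp add: less_imp_le)
next
  show "(\<Sum>a<card (merged_sets m F w). merged_weight m F w a) = 1"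
    using sum_merged_weight[OF sys] .
next
  fix a b p assume ab: "a < card (merged_sets m F w)" "b < card (merged_sets m F w)" and p: "p \<in> {1..n}"
  show "0 \<le> merged_split m F w s a b p"
    using merged_split_nonneg[OF sys p] .
  show "merged_split m F w s a b p \<le> 1"
    using p sum_merged_split[OF sys ab] merged_split_nonneg[OF sys]
      member_le_sum[of p "{1..n}" "merged_split m F w s a b"]
    by simp
next
  fix a b assume "a < card (merged_sets m F w)" "b < card (merged_sets m F w)"
  then show "(\<Sum>p\<in>{1..n}. merged_split m F w s a b p) = 1"
    using sum_merged_split[OF sys] by blast
qed

lemma sum_pos_obtain:
  fixes f :: "'a \<Rightarrow> 'b::{ordered_comm_monoid_add, linorder}"
  assumes "0 < sum f A"
  obtains a where "a \<in> A" "0 < f a"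
proof (rule ccontr)
  assume "\<not> thesis"
  then have "sum f A \<le> 0"
    using that by (intro sum_nonpos) (meson not_less)
  with assms show False
    by simp
qed

lemma intersecting_system_merged:
  assumes int: "intersecting_system n m F w s"
  shows "intersecting_system n (card (merged_sets m F w)) (from_nat_into (merged_sets m F w))
    (merged_weight m F w) (merged_split m F w s)"
  unfolding intersecting_system_def
proof (intro allI impI ballI)
  fix a b p assume ab: "a < card (merged_sets m F w)" "b < card (merged_sets m F w)"
    and p: "p \<in> {1..n}" and pos: "0 < merged_split m F w s a b p"
  have "0 < merged_weight m F w a * merged_weight m F w b * merged_split m F w s a b p"
    using pos merged_weight_pos[OF ab(1)] merged_weight_pos[OF ab(2)] by simp
  then have "0 < (\<Sum>i\<in>merged_class m F w a. \<Sum>j\<in>merged_class m F w b. w i * w j * s i j p)"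
    by (simp only: merged_split_scaled[OF ab])
  then obtain i where i: "i \<in> merged_class m F w a"
    and "0 < (\<Sum>j\<in>merged_class m F w b. w i * w j * s i j p)"
    by (rule sum_pos_obtain)
  from this(2) obtain j where j: "j \<in> merged_class m F w b" and "0 < w i * w j * s i j p"
    by (rule sum_pos_obtain)
  moreover have "0 < w i * w j"
    using i j by (simp add: merged_class_def)
  ultimately have "0 < s i j p"
    by (simp add: zero_less_mult_iff)
  moreover have "i < m" "j < m"
    using i j by (simp_all add: merged_class_def)
  ultimately have "p \<in> F i \<inter> F j"
    using int p unfolding intersecting_system_def by blast
  then show "p \<in> from_nat_into (merged_sets m F w) a \<inter> from_nat_into (merged_sets m F w) b"
    using i j by (simp add: merged_class_def)
qed

section \<open>Small systems are uniformly unbalanced\<close>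

lemma overload_uniformly_positive_on_small_family:
  assumes "n > 0" and "finite G" and "\<forall>A\<in>G. card A < kmin n"
  obtains \<delta> where "0 < \<delta>"
    "\<And>w s. is_system n (card G) (from_nat_into G) w s \<Longrightarrow>
      intersecting_system n (card G) (from_nat_into G) w s \<Longrightarrow> \<delta> \<le> overload n (card G) w s"
proof -
  have "\<forall>i<card G. card (from_nat_into G i) < kmin n"
    using assms(2,3) bij_betwE[OF bij_betw_from_nat_into_finite] by blast
  then show ?thesis
    using that overload_uniformly_positive overload_pos_if_sets_small[OF assms(1)] by metis
qed

lemma small_systems_uniformly_overloaded:
  assumes "n > 0"
  obtains \<delta> where "0 < \<delta>"
    "\<And>m F w s. is_system n m F w s \<Longrightarrow> intersecting_system n m F w s \<Longrightarrow>
      \<forall>i<m. card (F i) < kmin n \<Longrightarrow> \<delta> \<le> overload n m w s"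
proof -
  define small where "small = {A. A \<subseteq> {1..n} \<and> card A < kmin n}"
  have "finite small"
    unfolding small_def by (rule finite_subset[of _ "Pow {1..n}"]) auto
  have "\<exists>\<delta>>0. \<forall>w s. is_system n (card G) (from_nat_into G) w s \<longrightarrow>
      intersecting_system n (card G) (from_nat_into G) w s \<longrightarrow> \<delta> \<le> overload n (card G) w s"
    if "G \<subseteq> small" for G
    using overload_uniformly_positive_on_small_family[OF assms, of G] that \<open>finite small\<close>
    by (metis (no_types, lifting) finite_subset mem_Collect_eq small_def subsetD)
  then obtain d where d: "\<And>G. G \<subseteq> small \<Longrightarrow> 0 < d G \<and> (\<forall>w s.
      is_system n (card G) (from_nat_into G) w s \<longrightarrow>
      intersecting_system n (card G) (from_nat_into G) w s \<longrightarrow> d G \<le> overload n (card G) w s)"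
    by metis
  define \<delta> where "\<delta> = Min (d ` Pow small)"
  show thesis
  proof (rule that)
    show "0 < \<delta>"
      unfolding \<delta>_def using \<open>finite small\<close> d by (subst Min_gr_iff) auto
  next
    fix m F w s
    assume sys: "is_system n m F w s" and int: "intersecting_system n m F w s"
      and small_sets: "\<forall>i<m. card (F i) < kmin n"
    have "merged_sets m F w \<subseteq> small"
      using sys small_sets by (auto simp: merged_sets_def small_def is_system_def)
    then have "\<delta> \<le> d (merged_sets m F w)"
      unfolding \<delta>_def using \<open>finite small\<close> by (intro Min_le) auto
    also have "\<dots> \<le> overload n (card (merged_sets m F w)) (merged_weight m F w) (merged_split m F w s)"
      using d[OF \<open>merged_sets m F w \<subseteq> small\<close>] is_system_merged[OF sys]
        intersecting_system_merged[OF int] by blast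
    also have "\<dots> = overload n m w s"
      by (simp add: overload_def load_merged[OF sys])
    finally show "\<delta> \<le> overload n m w s" .
  qed
qed

section \<open>Systems induced by partitionings of the complete graph\<close>

definition replica_set :: "('v \<times> 'v) set \<Rightarrow> ('v \<times> 'v \<Rightarrow> 'p) \<Rightarrow> 'v \<Rightarrow> 'p set" where
  "replica_set E f v = f ` incident_edges E v"

lemma replication_factor_pos:
  assumes "finite E" and "(v, v) \<in> E"
  shows "0 < replication_factor E f v"
proof -
  have "finite (incident_edges E v)"
    using assms(1) by (simp add: incident_edges_def)
  moreover have "(v, v) \<in> incident_edges E v"
    using assms(2) by (simp add: incident_edges_def)
  ultimately show ?thesis
    unfolding replication_factor_def by (auto simp: card_gt_0_iff)
qed

lemma is_system_complete_graph:
  fixes f :: "nat \<times> nat \<Rightarrow> nat"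
  assumes "N > 0" and "partitioning ({..<N} \<times> {..<N}) {1..n} f"
  shows "is_system n N (replica_set ({..<N} \<times> {..<N}) f) (\<lambda>_. 1 / real N)
    (\<lambda>u v p. of_bool (f (u, v) = p))"
proof -
  have "replica_set ({..<N} \<times> {..<N}) f v \<subseteq> {1..n}" for v
    using assms(2) by (auto simp: replica_set_def incident_edges_def partitioning_def)
  moreover have "f (u, v) \<in> {1..n}" if "u < N" "v < N" for u v
    using assms(2) that by (simp add: partitioning_def)
  ultimately show ?thesis
    using assms(1) by (simp add: is_system_def)
qed

lemma intersecting_system_complete_graph:
  "intersecting_system n N (replica_set ({..<N} \<times> {..<N}) f) w (\<lambda>u v p. of_bool (f (u, v) = p))"
  by (force simp: intersecting_system_def replica_set_def incident_edges_def)

lemma load_complete_graph: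
  "load N (\<lambda>_. 1 / real N) (\<lambda>u v p. of_bool (f (u, v) = p)) p =
    real (card {e \<in> {..<N} \<times> {..<N}. f e = p}) / real (card ({..<N} \<times> {..<N}))"
proof -
  have "load N (\<lambda>_. 1 / real N) (\<lambda>u v p. of_bool (f (u, v) = p)) p =
      (\<Sum>e\<in>{..<N} \<times> {..<N}. of_bool (f e = p) / (real N * real N))"
    by (simp add: load_def sum.cartesian_product)
  also have "\<dots> = real (card {e \<in> {..<N} \<times> {..<N}. f e = p}) / (real N * real N)"
    by (simp add: sum_divide_distrib[symmetric] Int_def conj_commute)
  finally show ?thesis
    by (simp add: card_cartesian_product)
qed

lemma part_share_le_imbalance:
  assumes "finite E" and "finite P" and "p \<in> P"
  shows "real (card {e \<in> E. f e = p}) / real (card E) \<le> imbalance E P f / real (card P)"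
proof -
  have "card {e \<in> E. f e = p} \<le> Max ((\<lambda>l. card {e \<in> E. f e = l}) ` P)"
    using assms by (intro Max_ge) auto
  moreover have "0 < card P"
    using assms(2,3) card_gt_0_iff by blast
  ultimately show ?thesis
    by (simp add: imbalance_def divide_right_mono)
qed

lemma card_replica_set_less:
  fixes v N :: nat
  assumes "v < N" and "replication_factor ({..<N} \<times> {..<N}) f v \<le> k - 1"
  shows "card (replica_set ({..<N} \<times> {..<N}) f v) < k"
proof -
  have "0 < replication_factor ({..<N} \<times> {..<N}) f v"
    using assms(1) by (intro replication_factor_pos) auto
  then show ?thesis
    using assms(2) by (simp add: replica_set_def replication_factor_def)
qed

lemma overload_complete_graph_le:
  assumes "n > 0" and "0 \<le> \<epsilon>" and "imbalance ({..<N} \<times> {..<N}) {1..n} f \<le> 1 + \<epsilon>"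
  shows "overload n N (\<lambda>_. 1 / real N) (\<lambda>u v p. of_bool (f (u, v) = p)) \<le> \<epsilon>"
proof (rule overload_le_if_load_le[OF assms(1,2)])
  show "\<forall>p\<in>{1..n}. load N (\<lambda>_. 1 / real N) (\<lambda>u v p. of_bool (f (u, v) = p)) p \<le> (1 + \<epsilon>) / real n"
  proof
    fix p :: nat assume "p \<in> {1..n}"
    then have "load N (\<lambda>_. 1 / real N) (\<lambda>u v p. of_bool (f (u, v) = p)) p \<le>
        imbalance ({..<N} \<times> {..<N}) {1..n} f / real n"
      using part_share_le_imbalance[of "{..<N} \<times> {..<N}" "{1..n}" p f]
      by (simp add: load_complete_graph)
    also have "\<dots> \<le> (1 + \<epsilon>) / real n"
      using assms(3) by (simp add: divide_right_mono)
    finally show "load N (\<lambda>_. 1 / real N) (\<lambda>u v p. of_bool (f (u, v) = p)) p \<le> (1 + \<epsilon>) / real n" .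
  qed
qed

theorem theorem2:
  fixes n :: nat
  assumes "n > 0"
  shows "\<exists>\<epsilon>::real. \<epsilon> > 0 \<and>
    (\<forall>N::nat. N > 0 \<longrightarrow>
      \<not> (\<exists>f :: nat \<times> nat \<Rightarrow> nat.
            partitioning ({..<N} \<times> {..<N}) {1..n} f \<and>
            (\<forall>v\<in>{..<N}. replication_factor ({..<N} \<times> {..<N}) f v \<le> kmin n - 1) \<and>
            imbalance ({..<N} \<times> {..<N}) {1..n} f \<le> 1 + \<epsilon>))"
proof -
  obtain \<delta> where "0 < \<delta>" and \<delta>: "\<And>m F w s. is_system n m F w s \<Longrightarrow> intersecting_system n m F w s \<Longrightarrow>
      \<forall>i<m. card (F i) < kmin n \<Longrightarrow> \<delta> \<le> overload n m w s"
    using small_systems_uniformly_overloaded[OF assms] by blast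
  show ?thesis
  proof (intro exI[of _ "\<delta> / 2"] conjI allI impI notI)
    fix N :: nat assume "N > 0"
    assume "\<exists>f. partitioning ({..<N} \<times> {..<N}) {1..n} f \<and>
      (\<forall>v\<in>{..<N}. replication_factor ({..<N} \<times> {..<N}) f v \<le> kmin n - 1) \<and>
      imbalance ({..<N} \<times> {..<N}) {1..n} f \<le> 1 + \<delta> / 2"
    then obtain f where part: "partitioning ({..<N} \<times> {..<N}) {1..n} f"
      and rf: "\<forall>v\<in>{..<N}. replication_factor ({..<N} \<times> {..<N}) f v \<le> kmin n - 1"
      and ib: "imbalance ({..<N} \<times> {..<N}) {1..n} f \<le> 1 + \<delta> / 2"
      by blast
    have "\<forall>v<N. card (replica_set ({..<N} \<times> {..<N}) f v) < kmin n"
      using rf card_replica_set_less by blast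
    then have "\<delta> \<le> overload n N (\<lambda>_. 1 / real N) (\<lambda>u v p. of_bool (f (u, v) = p))"
      using \<delta> is_system_complete_graph[OF \<open>N > 0\<close> part] intersecting_system_complete_graph by blast
    moreover have "\<dots> \<le> \<delta> / 2"
      using overload_complete_graph_le[OF assms _ ib] \<open>0 < \<delta>\<close> by simp
    ultimately show False
      using \<open>0 < \<delta>\<close> by simp
  qed (use \<open>0 < \<delta>\<close> in simp)
qed

end
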